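(* Assume bifurcation assumption (B) with non-critical maximal cells, fix a root subnetwork $B$, and let $p\in C\setminus B$ be critical (hence non-maximal). Assume hypothesis (H) at $p$ and condition (L). Then generically: (i) if $\bigl(\sum_{\tau\notin\mathcal L_p}a_\tau d_{\tau(p)}+\ell\bigr)/\sum_{\sigma,\tau\in\mathcal L_p}f_{\sigma\tau}>0$, the $p$-th bifurcation equation has no solution branches near $0$ for small $\lambda>0$; (ii) if $\bigl(\sum_{\tau\notin\mathcal L_p}a_\tau d_{\tau(p)}+\ell\bigr)/\sum_{\sigma,\tau\in\mathcal L_p}f_{\sigma\tau}<0$, it has the two (saddle-node) branches $x_p(\lambda)=d_p^\pm\sqrt{\lambda}+O(|\lambda|)$ for small $\lambda>0$, with $$d_p^\pm=\pm\sqrt{-\frac{\sum_{\tau\notin\mathcal L_p}a_\tau d_{\tau(p)}+\ell}{\sum_{\sigma,\tau\in\mathcal L_p}f_{\sigma\tau}}}\neq0.$$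
   Context: Network: finite cells $C$, pairwise distinct maps $\Sigma=\{\sigma_1,\dots,\sigma_n\}$, $\sigma_i\colon C\to C$, $\sigma_1=\mathrm{Id}_C$; feedforward (no cycles of length $\ge 2$); $p\trianglelefteq q$ iff there is a path from $q$ to $p$ (partial order), $q\vartriangleright p$ iff $p\trianglelefteq q$, $p\neq q$; maximal cells have $\sigma(p)=p$ for all $\sigma$. $\Sigma(p)=\{\sigma(p):\sigma\in\Sigma\}$, $\Sigma^\star(p)=\Sigma(p)\setminus\{p\}$. Bifurcation setting: $V=\mathbb R$, smooth $f\colon\mathbb R^n\times\mathbb R\to\mathbb R$ with first $n$ arguments labelled by $\Sigma$, $\gamma_f(x,\lambda)_p=f(x_{\sigma_1(p)},\dots,x_{\sigma_n(p)},\lambda)$; the $p$-th bifurcation equation $\gamma_f(x,\lambda)_p=0$ is solved for $x_p$ near 0 given $x_q(\lambda)$ for $q\vartriangleright p$. $a_\sigma=\partial_\sigma f(0,0)$, $f_{\sigma\tau}=\tfrac12\partial_\sigma\partial_\tau f(0,0)$, $\ell=\partial_\lambda f(0,0)$. $\mathcal L_p=\{\sigma:\sigma(p)=p\}$; $p$ critical iff $\sum_{\sigma\in\mathcal L_p}a_\sigma=0$. (B): $f(0,0)=0$, some cell critical, exactly the cells sharing $\mathcal L_p$ with a critical cell are critical. Root subnetwork: a subnetwork ($\sigma(B)\subset B$ for all $\sigma$) $\emptyset\ne B\subsetneq C$ containing all maximal cells such that every $p\notin B$ with all $q\vartriangleright p$ in $B$ is critical. Hypothesis (H) at $p$: for all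 $q\vartriangleright p$ and small $\lambda>0$, $x_q(\lambda)=d_q\lambda^{2^{-\xi_q}}+O(|\lambda|^{2^{-(\xi_q-1)}})$ with $d_q\ne0$ and integers $\xi_q\ge0$; $\Xi_p=\max_{q\in\Sigma^\star(p)}\xi_q$. Condition (L): $\Xi_p=0$ and $\sum_{\tau\notin\mathcal L_p}a_\tau d_{\tau(p)}+\ell\ne0$. "Generically" means for an open dense set of Taylor coefficients of $f$ at $(0,0)$ (in particular $\sum_{\sigma,\tau\in\mathcal L_p}f_{\sigma\tau}\ne0$). *)

theory Defs
  imports "HOL-Analysis.Analysis" "HOL-Library.Landau_Symbols"
begin

text \<open>Network data: cells form a finite type 'c (so C = UNIV), the maps of
  \<Sigma> are indexed by a finite type 's via sg :: 's \<Rightarrow> 'c \<Rightarrow> 'c (so n = CARD('s)),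
  and the arguments of f are labelled by 's, i.e. f :: real^'s \<times> real \<Rightarrow> real.\<close>

definition edges :: "('s \<Rightarrow> 'c \<Rightarrow> 'c) \<Rightarrow> ('c \<times> 'c) set" where
  "edges sg = {(sg s c, c) | s c. True}"

text \<open>below sg p q : p \<unlhd> q, i.e. there is a path from q to p.\<close>
definition below :: "('s \<Rightarrow> 'c \<Rightarrow> 'c) \<Rightarrow> 'c \<Rightarrow> 'c \<Rightarrow> bool" where
  "below sg p q \<longleftrightarrow> (q, p) \<in> (edges sg)\<^sup>*"

definition strictly_above :: "('s \<Rightarrow> 'c \<Rightarrow> 'c) \<Rightarrow> 'c \<Rightarrow> 'c \<Rightarrow> bool" where
  "strictly_above sg q p \<longleftrightarrow> below sg p q \<and> p \<noteq> q"

definition feedforward :: "('s \<Rightarrow> 'c \<Rightarrow> 'c) \<Rightarrow> bool" where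
  "feedforward sg \<longleftrightarrow> (\<forall>p q. below sg p q \<and> below sg q p \<longrightarrow> p = q)"

definition network :: "('s::finite \<Rightarrow> 'c::finite \<Rightarrow> 'c) \<Rightarrow> 's \<Rightarrow> bool" where
  "network sg s1 \<longleftrightarrow> inj sg \<and> sg s1 = id \<and> feedforward sg"

definition maximal :: "('s \<Rightarrow> 'c \<Rightarrow> 'c) \<Rightarrow> 'c \<Rightarrow> bool" where
  "maximal sg p \<longleftrightarrow> \<not> (\<exists>q. strictly_above sg q p)"

definition Sigma_img :: "('s \<Rightarrow> 'c \<Rightarrow> 'c) \<Rightarrow> 'c \<Rightarrow> 'c set" where
  "Sigma_img sg p = (\<lambda>s. sg s p) ` UNIV"

definition Sigma_star :: "('s \<Rightarrow> 'c \<Rightarrow> 'c) \<Rightarrow> 'c \<Rightarrow> 'c set" where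
  "Sigma_star sg p = Sigma_img sg p - {p}"

definition Lp :: "('s \<Rightarrow> 'c \<Rightarrow> 'c) \<Rightarrow> 'c \<Rightarrow> 's set" where
  "Lp sg p = {s. sg s p = p}"

fun Ck :: "nat \<Rightarrow> ('a::real_normed_vector \<Rightarrow> real) \<Rightarrow> bool" where
  "Ck 0 g \<longleftrightarrow> continuous_on UNIV g"
| "Ck (Suc k) g \<longleftrightarrow> (\<forall>x. g differentiable (at x)) \<and>
                     (\<forall>v. Ck k (\<lambda>x. frechet_derivative g (at x) v))"

definition smooth :: "('a::real_normed_vector \<Rightarrow> real) \<Rightarrow> bool" where
  "smooth g \<longleftrightarrow> (\<forall>k. Ck k g)"

definition acoef :: "((real^('s::finite)) \<times> real \<Rightarrow> real) \<Rightarrow> 's \<Rightarrow> real" where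
  "acoef f s = deriv (\<lambda>t. f (axis s t, 0)) 0"

definition fcoef :: "((real^('s::finite)) \<times> real \<Rightarrow> real) \<Rightarrow> 's \<Rightarrow> 's \<Rightarrow> real" where
  "fcoef f s t = (1/2) * deriv (\<lambda>u. deriv (\<lambda>v. f (axis s u + axis t v, 0)) 0) 0"

definition lcoef :: "((real^('s::finite)) \<times> real \<Rightarrow> real) \<Rightarrow> real" where
  "lcoef f = deriv (\<lambda>l. f (0, l)) 0"

definition critical :: "('s::finite \<Rightarrow> 'c \<Rightarrow> 'c) \<Rightarrow> ((real^('s::finite)) \<times> real \<Rightarrow> real) \<Rightarrow> 'c \<Rightarrow> bool" where
  "critical sg f p \<longleftrightarrow> (\<Sum>s\<in>Lp sg p. acoef f s) = 0"

definition condB :: "('s::finite \<Rightarrow> 'c \<Rightarrow> 'c) \<Rightarrow> ((real^('s::finite)) \<times> real \<Rightarrow> real) \<Rightarrow> bool" where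
  "condB sg f \<longleftrightarrow> f (0, 0) = 0 \<and> (\<exists>p. critical sg f p) \<and>
     (\<forall>p. critical sg f p \<longleftrightarrow> (\<exists>q. critical sg f q \<and> Lp sg p = Lp sg q))"

definition subnetwork :: "('s \<Rightarrow> 'c \<Rightarrow> 'c) \<Rightarrow> 'c set \<Rightarrow> bool" where
  "subnetwork sg B \<longleftrightarrow> (\<forall>s. sg s ` B \<subseteq> B)"

definition root_subnetwork ::
  "('s::finite \<Rightarrow> 'c \<Rightarrow> 'c) \<Rightarrow> ((real^('s::finite)) \<times> real \<Rightarrow> real) \<Rightarrow> 'c set \<Rightarrow> bool" where
  "root_subnetwork sg f B \<longleftrightarrow> subnetwork sg B \<and> B \<noteq> {} \<and> B \<noteq> UNIV \<and>
     {p. maximal sg p} \<subseteq> B \<and>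
     (\<forall>p. p \<notin> B \<and> (\<forall>q. strictly_above sg q p \<longrightarrow> q \<in> B) \<longrightarrow> critical sg f p)"

definition gamma ::
  "((real^('s::finite)) \<times> real \<Rightarrow> real) \<Rightarrow> ('s \<Rightarrow> 'c \<Rightarrow> 'c) \<Rightarrow> ('c \<Rightarrow> real) \<Rightarrow> real \<Rightarrow> 'c \<Rightarrow> real" where
  "gamma f sg x l p = f (\<chi> s. x (sg s p), l)"

definition hypH ::
  "('s \<Rightarrow> 'c \<Rightarrow> 'c) \<Rightarrow> ('c \<Rightarrow> real \<Rightarrow> real) \<Rightarrow> ('c \<Rightarrow> real) \<Rightarrow> ('c \<Rightarrow> nat) \<Rightarrow> 'c \<Rightarrow> bool" where
  "hypH sg xs d xi p \<longleftrightarrow> (\<forall>q. strictly_above sg q p \<longrightarrow>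
      d q \<noteq> 0 \<and>
      (\<lambda>l. xs q l - d q * l powr (2 powr (- real (xi q))))
        \<in> O[at_right 0](\<lambda>l. l powr (2 powr (- (real (xi q) - 1)))))"

definition Xi :: "('s \<Rightarrow> 'c \<Rightarrow> 'c) \<Rightarrow> ('c \<Rightarrow> nat) \<Rightarrow> 'c \<Rightarrow> nat" where
  "Xi sg xi p = Max (xi ` Sigma_star sg p)"

definition Acoef ::
  "('s::finite \<Rightarrow> 'c \<Rightarrow> 'c) \<Rightarrow> ((real^('s::finite)) \<times> real \<Rightarrow> real) \<Rightarrow> ('c \<Rightarrow> real) \<Rightarrow> 'c \<Rightarrow> real" where
  "Acoef sg f d p = (\<Sum>t\<in>UNIV - Lp sg p. acoef f t * d (sg t p)) + lcoef f"

definition Fcoef :: "('s::finite \<Rightarrow> 'c \<Rightarrow> 'c) \<Rightarrow> ((real^('s::finite)) \<times> real \<Rightarrow> real) \<Rightarrow> 'c \<Rightarrow> real" where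
  "Fcoef sg f p = (\<Sum>s\<in>Lp sg p. \<Sum>t\<in>Lp sg p. fcoef f s t)"

definition condL ::
  "('s::finite \<Rightarrow> 'c \<Rightarrow> 'c) \<Rightarrow> ((real^('s::finite)) \<times> real \<Rightarrow> real) \<Rightarrow> ('c \<Rightarrow> real) \<Rightarrow> ('c \<Rightarrow> nat) \<Rightarrow> 'c \<Rightarrow> bool" where
  "condL sg f d xi p \<longleftrightarrow> Xi sg xi p = 0 \<and> Acoef sg f d p \<noteq> 0"

text \<open>The p-th bifurcation equation, as a function of the unknown x_p = y,
  with the upstream values x_q = xs q \<lambda> inserted.\<close>
definition peq ::
  "((real^('s::finite)) \<times> real \<Rightarrow> real) \<Rightarrow> ('s \<Rightarrow> 'c \<Rightarrow> 'c) \<Rightarrow> ('c \<Rightarrow> real \<Rightarrow> real) \<Rightarrow> 'c \<Rightarrow> real \<Rightarrow> real \<Rightarrow> real" where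
  "peq f sg xs p y l = gamma f sg ((\<lambda>c. xs c l)(p := y)) l p"

end

(* Along the line x_p = y, with the upstream values inserted, the p-th equation reads
   \<phi>_\<lambda>(y) = f(u(\<lambda>) + y e), where e is the sum of the coordinate directions \<sigma> \<in> L_p. Criticality
   of p kills the derivative of f along e at 0, the second derivative along e is 2 \<Sum> f_\<sigma>\<tau>, and
   since \<Xi>_p = 0 the upstream point is u(\<lambda>) = \<lambda> v + O(\<lambda>^2) with \<partial>_v f(0) = \<Sum> a_\<tau> d_\<tau>(p) + \<ell>.
   Taylor expansion therefore gives \<phi>_\<lambda>(y) = A \<lambda> + F y^2 + O(\<lambda>^2 + \<lambda>|y| + |y|^3). If A/F > 0
   the quadratic part keeps one sign near 0. If A/F < 0, the intermediate value theorem on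
   [d\<surd>\<lambda> - K\<lambda>, d\<surd>\<lambda> + K\<lambda>] and its mirror image gives one zero of each sign, and convexity of
   \<phi>_\<lambda> rules out any other. *)

theory Submission
  imports Defs
begin

definition dir_deriv :: "('a::real_normed_vector \<Rightarrow> real) \<Rightarrow> 'a \<Rightarrow> 'a \<Rightarrow> real" where
  "dir_deriv g v = (\<lambda>x. frechet_derivative g (at x) v)"

lemma smooth_continuous_on: "smooth g \<Longrightarrow> continuous_on UNIV g"
  unfolding smooth_def by (metis Ck.simps(1))

lemma smooth_differentiable: "smooth g \<Longrightarrow> g differentiable (at x)"
  unfolding smooth_def by (metis Ck.simps(2))

lemma smooth_dir_deriv: "smooth g \<Longrightarrow> smooth (dir_deriv g v)"
  unfolding smooth_def dir_deriv_def by (metis Ck.simps(2))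

lemma smooth_has_derivative:
  "smooth g \<Longrightarrow> (g has_derivative frechet_derivative g (at x)) (at x)"
  using smooth_differentiable frechet_derivative_works by blast

lemma smooth_linear_frechet_derivative: "smooth g \<Longrightarrow> linear (frechet_derivative g (at x))"
  using smooth_has_derivative has_derivative_linear by blast

lemma smooth_has_real_derivative_line:
  assumes "smooth g"
  shows "((\<lambda>t. g (x + t *\<^sub>R v)) has_real_derivative dir_deriv g v (x + t *\<^sub>R v)) (at t)"
proof -
  have "((\<lambda>t. x + t *\<^sub>R v) has_derivative (\<lambda>h. h *\<^sub>R v)) (at t)"
    by (auto intro!: derivative_eq_intros)
  from has_derivative_compose[OF this smooth_has_derivative[OF assms]]
  have "((\<lambda>t. g (x + t *\<^sub>R v)) has_derivative
          (\<lambda>h. frechet_derivative g (at (x + t *\<^sub>R v)) (h *\<^sub>R v))) (at t)"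
    by (simp add: o_def)
  moreover have "(\<lambda>h. frechet_derivative g (at (x + t *\<^sub>R v)) (h *\<^sub>R v))
      = (*) (dir_deriv g v (x + t *\<^sub>R v))"
    using smooth_linear_frechet_derivative[OF assms] by (auto simp: dir_deriv_def linear_scale)
  ultimately show ?thesis unfolding has_field_derivative_def by simp
qed

lemma deriv_line_eq_dir_deriv: "smooth g \<Longrightarrow> deriv (\<lambda>t. g (x + t *\<^sub>R v)) t = dir_deriv g v (x + t *\<^sub>R v)"
  by (rule DERIV_imp_deriv[OF smooth_has_real_derivative_line])

lemma dir_deriv_sum_scaleR:
  assumes "smooth g" "finite S"
  shows "dir_deriv g (\<Sum>i\<in>S. c i *\<^sub>R v i) x = (\<Sum>i\<in>S. c i * dir_deriv g (v i) x)"
  using smooth_linear_frechet_derivative[OF assms(1)] assms(2)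
  by (simp add: dir_deriv_def linear_sum linear_scale)

lemma dir_deriv_add:
  "smooth g \<Longrightarrow> dir_deriv g (u + v) x = dir_deriv g u x + dir_deriv g v x"
  using smooth_linear_frechet_derivative[of g x] by (simp add: dir_deriv_def linear_add)

lemma dir_deriv_sum_fun:
  assumes "\<And>t. t \<in> T \<Longrightarrow> smooth (h t)"
  shows "dir_deriv (\<lambda>x. \<Sum>t\<in>T. h t x) v x = (\<Sum>t\<in>T. dir_deriv (h t) v x)"
proof -
  have "((\<lambda>x. \<Sum>t\<in>T. h t x) has_derivative
          (\<lambda>w. \<Sum>t\<in>T. frechet_derivative (h t) (at x) w)) (at x)"
    by (rule has_derivative_sum) (use assms smooth_has_derivative in blast)
  then show ?thesis
    unfolding dir_deriv_def by (simp add: frechet_derivative_at[symmetric])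
qed

lemma smooth_lipschitz_unit_ball:
  fixes g :: "'a::euclidean_space \<Rightarrow> real"
  assumes "smooth g"
  shows "\<exists>K\<ge>0. \<forall>u w. norm u \<le> 1 \<longrightarrow> norm w \<le> 1 \<longrightarrow> \<bar>g u - g w\<bar> \<le> K * norm (u - w)"
proof -
  have "\<exists>M>0. \<forall>x\<in>cball 0 1. \<bar>dir_deriv g b x\<bar> \<le> M" for b
  proof -
    have "continuous_on (cball 0 1) (dir_deriv g b)"
      using smooth_continuous_on[OF smooth_dir_deriv[OF assms]] continuous_on_subset by blast
    then have "bounded (dir_deriv g b ` cball 0 1)"
      by (intro compact_imp_bounded compact_continuous_image) auto
    then show ?thesis by (auto simp: bounded_pos)
  qed
  then obtain M where M: "\<And>b. M b > 0" "\<And>b x. x \<in> cball 0 1 \<Longrightarrow> \<bar>dir_deriv g b x\<bar> \<le> M b"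
    by metis
  define K where "K = (\<Sum>b\<in>Basis. M b)"
  have "onorm (frechet_derivative g (at x)) \<le> K" if x: "x \<in> cball 0 1" for x
  proof (rule onorm_le)
    fix y :: 'a
    have "frechet_derivative g (at x) y = (\<Sum>b\<in>Basis. (y \<bullet> b) * dir_deriv g b x)"
      using dir_deriv_sum_scaleR[OF assms, of Basis "\<lambda>b. y \<bullet> b" "\<lambda>b. b" x]
      by (simp add: dir_deriv_def euclidean_representation)
    also have "\<bar>\<dots>\<bar> \<le> (\<Sum>b\<in>Basis. \<bar>(y \<bullet> b) * dir_deriv g b x\<bar>)"
      by (rule sum_abs)
    also have "\<dots> \<le> (\<Sum>b\<in>Basis. norm y * M b)"
    proof (rule sum_mono)
      fix b :: 'a assume "b \<in> Basis"
      then have "\<bar>y \<bullet> b\<bar> \<le> norm y" by (rule Basis_le_norm)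
      then show "\<bar>(y \<bullet> b) * dir_deriv g b x\<bar> \<le> norm y * M b"
        using M(2)[OF x] by (simp add: abs_mult mult_mono')
    qed
    also have "\<dots> = K * norm y" by (simp add: K_def sum_distrib_left mult.commute)
    finally show "norm (frechet_derivative g (at x) y) \<le> K * norm y" by simp
  qed
  then have "\<bar>g u - g w\<bar> \<le> K * norm (u - w)" if "norm u \<le> 1" "norm w \<le> 1" for u w
    using differentiable_bound[of "cball 0 1" g "\<lambda>x. frechet_derivative g (at x)" K u w]
      that has_derivative_at_withinI[OF smooth_has_derivative[OF assms]]
    by auto
  moreover have "K \<ge> 0" unfolding K_def using M(1) by (simp add: sum_nonneg less_imp_le)
  ultimately show ?thesis by blast
qed

lemma smooth_ray_remainder:
  fixes g :: "'a::euclidean_space \<Rightarrow> real"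
  assumes "smooth g"
  shows "\<exists>K\<ge>0. \<forall>t. 0 \<le> t \<longrightarrow> t * norm v \<le> 1 \<longrightarrow>
           \<bar>g (t *\<^sub>R v) - g 0 - t * dir_deriv g v 0\<bar> \<le> K * t^2"
proof -
  obtain L where L: "L \<ge> 0" "\<And>u w. norm u \<le> 1 \<Longrightarrow> norm w \<le> 1 \<Longrightarrow>
      \<bar>dir_deriv g v u - dir_deriv g v w\<bar> \<le> L * norm (u - w)"
    using smooth_lipschitz_unit_ball[OF smooth_dir_deriv[OF assms]] by blast
  have "\<bar>g (t *\<^sub>R v) - g 0 - t * dir_deriv g v 0\<bar> \<le> (L * norm v) * t^2"
    if t: "0 < t" "t * norm v \<le> 1" for t
  proof -
    obtain z where z: "0 < z" "z < t"
      and mvt: "g (0 + t *\<^sub>R v) - g (0 + 0 *\<^sub>R v) = (t - 0) * dir_deriv g v (0 + z *\<^sub>R v)"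
      using MVT2[of 0 t "\<lambda>s. g (0 + s *\<^sub>R v)" "\<lambda>s. dir_deriv g v (0 + s *\<^sub>R v)"]
        smooth_has_real_derivative_line[OF assms] t by blast
    have "z * norm v \<le> t * norm v" using z by (simp add: mult_right_mono)
    then have "\<bar>dir_deriv g v (z *\<^sub>R v) - dir_deriv g v 0\<bar> \<le> L * (t * norm v)"
      using L(2)[of "z *\<^sub>R v" 0] L(1) z t by (auto intro: order.trans mult_left_mono)
    moreover have "g (t *\<^sub>R v) - g 0 - t * dir_deriv g v 0
        = t * (dir_deriv g v (z *\<^sub>R v) - dir_deriv g v 0)"
      using mvt by (simp add: algebra_simps)
    ultimately have "\<bar>g (t *\<^sub>R v) - g 0 - t * dir_deriv g v 0\<bar> \<le> t * (L * (t * norm v))"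
      using t by (simp add: abs_mult mult_left_mono)
    then show ?thesis by (simp add: power2_eq_square algebra_simps)
  qed
  then show ?thesis using L(1)
    by (intro exI[of _ "L * norm v"]) (auto simp: le_less)
qed

lemma smooth_common_constant:
  fixes g :: "'a::euclidean_space \<Rightarrow> real"
  assumes g: "smooth g"
  obtains K where "K \<ge> 0"
    "\<And>h u v. h \<in> {g, dir_deriv g E, dir_deriv (dir_deriv g E) E} \<Longrightarrow>
       norm u \<le> 1 \<Longrightarrow> norm v \<le> 1 \<Longrightarrow> \<bar>h u - h v\<bar> \<le> K * norm (u - v)"
    "\<And>t. 0 \<le> t \<Longrightarrow> t * norm V \<le> 1 \<Longrightarrow>
       \<bar>g (t *\<^sub>R V) - g 0 - t * dir_deriv g V 0\<bar> \<le> K * t^2"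
proof -
  let ?g1 = "dir_deriv g E" and ?g2 = "dir_deriv (dir_deriv g E) E"
  obtain K0 where K0: "K0 \<ge> 0"
    "\<And>u v. norm u \<le> 1 \<Longrightarrow> norm v \<le> 1 \<Longrightarrow> \<bar>g u - g v\<bar> \<le> K0 * norm (u - v)"
    using smooth_lipschitz_unit_ball[OF g] by blast
  obtain K1 where K1: "K1 \<ge> 0"
    "\<And>u v. norm u \<le> 1 \<Longrightarrow> norm v \<le> 1 \<Longrightarrow> \<bar>?g1 u - ?g1 v\<bar> \<le> K1 * norm (u - v)"
    using smooth_lipschitz_unit_ball[OF smooth_dir_deriv[OF g]] by blast
  obtain K2 where K2: "K2 \<ge> 0"
    "\<And>u v. norm u \<le> 1 \<Longrightarrow> norm v \<le> 1 \<Longrightarrow> \<bar>?g2 u - ?g2 v\<bar> \<le> K2 * norm (u - v)"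
    using smooth_lipschitz_unit_ball[OF smooth_dir_deriv[OF smooth_dir_deriv[OF g]]] by blast
  obtain KR where KR: "KR \<ge> 0" "\<And>t. 0 \<le> t \<Longrightarrow> t * norm V \<le> 1 \<Longrightarrow>
      \<bar>g (t *\<^sub>R V) - g 0 - t * dir_deriv g V 0\<bar> \<le> KR * t^2"
    using smooth_ray_remainder[OF g] by blast
  define K where "K = K0 + K1 + K2 + KR"
  have K: "K \<ge> 0" "K0 \<le> K" "K1 \<le> K" "K2 \<le> K" "KR \<le> K"
    using K0(1) K1(1) K2(1) KR(1) by (simp_all add: K_def)
  have lip: "\<bar>h u - h v\<bar> \<le> K * norm (u - v)"
    if "h \<in> {g, ?g1, ?g2}" "norm u \<le> 1" "norm v \<le> 1" for h u v
    using that K0(2)[of u v] K1(2)[of u v] K2(2)[of u v]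
      mult_right_mono[OF K(2), of "norm (u - v)"] mult_right_mono[OF K(3), of "norm (u - v)"]
      mult_right_mono[OF K(4), of "norm (u - v)"]
    by auto
  have "\<bar>g (t *\<^sub>R V) - g 0 - t * dir_deriv g V 0\<bar> \<le> K * t^2"
    if "0 \<le> t" "t * norm V \<le> 1" for t
    using KR(2)[OF that] mult_right_mono[OF K(5) zero_le_power2[of t]] by linarith
  with K(1) lip show ?thesis using that by blast
qed

lemma taylor_second_order:
  fixes \<phi> \<phi>' \<phi>'' :: "real \<Rightarrow> real"
  assumes d1: "\<And>y. \<bar>y\<bar> < r \<Longrightarrow> (\<phi> has_real_derivative \<phi>' y) (at y)"
    and d2: "\<And>y. \<bar>y\<bar> < r \<Longrightarrow> (\<phi>' has_real_derivative \<phi>'' y) (at y)"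
    and y: "\<bar>y\<bar> < r"
  shows "\<exists>\<xi>. \<bar>\<xi>\<bar> \<le> \<bar>y\<bar> \<and> \<phi> y = \<phi> 0 + \<phi>' 0 * y + \<phi>'' \<xi> / 2 * y^2"
proof (cases "y = 0")
  case True then show ?thesis by (intro exI[of _ 0]) simp
next
  case False
  define diff where "diff = (\<lambda>m::nat. if m = 0 then \<phi> else if m = 1 then \<phi>' else \<phi>'')"
  have D: "\<forall>m t. m < 2 \<and> - \<bar>y\<bar> \<le> t \<and> t \<le> \<bar>y\<bar> \<longrightarrow> DERIV (diff m) t :> diff (Suc m) t"
  proof (intro allI impI)
    fix m t assume a: "m < (2::nat) \<and> - \<bar>y\<bar> \<le> t \<and> t \<le> \<bar>y\<bar>"
    then have t: "\<bar>t\<bar> < r" using y by auto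
    from a have "m = 0 \<or> m = 1" by auto
    then show "DERIV (diff m) t :> diff (Suc m) t"
      using d1[OF t] d2[OF t] by (auto simp: diff_def)
  qed
  have "\<exists>t. (if y < 0 then y < t \<and> t < 0 else 0 < t \<and> t < y) \<and>
      \<phi> y = (\<Sum>m<2. diff m 0 / fact m * (y - 0)^m) + diff 2 t / fact 2 * (y - 0)^2"
    by (rule Taylor[of 2 diff \<phi> "-\<bar>y\<bar>" "\<bar>y\<bar>"]) (use D False in \<open>auto simp: diff_def\<close>)
  then obtain t where t: "if y < 0 then y < t \<and> t < 0 else 0 < t \<and> t < y"
    and eq: "\<phi> y = (\<Sum>m<2. diff m 0 / fact m * (y - 0)^m) + diff 2 t / fact 2 * (y - 0)^2"
    by blast
  have "\<phi> y = \<phi> 0 + \<phi>' 0 * y + \<phi>'' t / 2 * y^2"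
    using eq by (simp add: numeral_2_eq_2 diff_def)
  moreover have "\<bar>t\<bar> \<le> \<bar>y\<bar>" using t by (auto split: if_splits)
  ultimately show ?thesis by blast
qed

text \<open>On (-r, r), \<phi> is A l + F y^2 up to an error O(c (l^2 + l |y| + |y|^3)); the parameter
  l plays the role of \<lambda>, and \<phi>', \<phi>'' are the derivatives of \<phi>.\<close>

definition near_quadratic ::
  "(real \<Rightarrow> real) \<Rightarrow> (real \<Rightarrow> real) \<Rightarrow> (real \<Rightarrow> real) \<Rightarrow> real \<Rightarrow> real \<Rightarrow> real \<Rightarrow> real \<Rightarrow> real \<Rightarrow> bool"
where
  "near_quadratic \<phi> \<phi>' \<phi>'' r A F c l \<longleftrightarrow>
     (\<forall>y. \<bar>y\<bar> < r \<longrightarrow> (\<phi> has_real_derivative \<phi>' y) (at y) \<and>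
        (\<phi>' has_real_derivative \<phi>'' y) (at y) \<and> \<bar>\<phi>'' y - 2*F\<bar> \<le> c*(\<bar>y\<bar>+l)) \<and>
     \<bar>\<phi> 0 - A*l\<bar> \<le> c*l^2 \<and> \<bar>\<phi>' 0\<bar> \<le> c*l"

lemma near_quadratic_approx:
  assumes nq: "near_quadratic \<phi> \<phi>' \<phi>'' r A F c l" and y: "\<bar>y\<bar> < r" and c: "c \<ge> 0"
  shows "\<bar>\<phi> y - (A*l + F*y^2)\<bar> \<le> c*l^2 + c*l*\<bar>y\<bar> + c*(\<bar>y\<bar>+l)*y^2/2"
proof -
  obtain \<xi> where \<xi>: "\<bar>\<xi>\<bar> \<le> \<bar>y\<bar>" and eq: "\<phi> y = \<phi> 0 + \<phi>' 0 * y + \<phi>'' \<xi> / 2 * y^2"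
    using taylor_second_order[of r \<phi> \<phi>' \<phi>'' y] nq y unfolding near_quadratic_def by blast
  have "\<phi> y - (A*l + F*y^2) = (\<phi> 0 - A*l) + \<phi>' 0 * y + (\<phi>'' \<xi> - 2*F) * y^2 / 2"
    using eq by (simp add: field_simps)
  moreover have "\<bar>\<phi>' 0 * y\<bar> \<le> c*l*\<bar>y\<bar>"
    using nq by (simp add: near_quadratic_def abs_mult mult_right_mono)
  moreover have "\<bar>\<phi>'' \<xi> - 2*F\<bar> \<le> c*(\<bar>y\<bar>+l)"
    using nq \<xi> y c unfolding near_quadratic_def by (smt (verit) mult_left_mono)
  then have "\<bar>(\<phi>'' \<xi> - 2*F) * y^2 / 2\<bar> \<le> c*(\<bar>y\<bar>+l)*y^2/2"
    by (simp add: abs_mult mult_right_mono)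
  ultimately show ?thesis using nq unfolding near_quadratic_def by (smt (verit))
qed

lemma near_quadratic_reflect:
  assumes "near_quadratic \<phi> \<phi>' \<phi>'' r A F c l"
  shows "near_quadratic (\<lambda>y. \<phi> (-y)) (\<lambda>y. - \<phi>' (-y)) (\<lambda>y. \<phi>'' (-y)) r A F c l"
  unfolding near_quadratic_def
proof (intro conjI allI impI)
  fix y :: real assume "\<bar>y\<bar> < r"
  then have "\<bar>-y\<bar> < r" by simp
  then have d1: "(\<phi> has_real_derivative \<phi>' (-y)) (at (-y))"
    and d2: "(\<phi>' has_real_derivative \<phi>'' (-y)) (at (-y))"
    and b: "\<bar>\<phi>'' (-y) - 2*F\<bar> \<le> c*(\<bar>-y\<bar>+l)"
    using assms unfolding near_quadratic_def by blast+
  show "((\<lambda>y. \<phi> (-y)) has_real_derivative - \<phi>' (-y)) (at y)"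
    using DERIV_mirror[where f=\<phi> and x=y] d1 by simp
  have "((\<lambda>y. \<phi>' (-y)) has_real_derivative - \<phi>'' (-y)) (at y)"
    using DERIV_mirror[where f=\<phi>' and x=y] d2 by simp
  then show "((\<lambda>y. - \<phi>' (-y)) has_real_derivative \<phi>'' (-y)) (at y)"
    using DERIV_minus by fastforce
  show "\<bar>\<phi>'' (-y) - 2*F\<bar> \<le> c*(\<bar>y\<bar>+l)" using b by simp
qed (use assms in \<open>auto simp: near_quadratic_def\<close>)

lemma near_quadratic_uminus:
  "near_quadratic \<phi> \<phi>' \<phi>'' r A F c l \<Longrightarrow>
   near_quadratic (\<lambda>y. - \<phi> y) (\<lambda>y. - \<phi>' y) (\<lambda>y. - \<phi>'' y) r (-A) (-F) c l"
  unfolding near_quadratic_def by (auto intro: DERIV_minus simp: abs_minus_commute)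

text \<open>Completing the square: the cross term c l |y| is absorbed by F y^2/2 and c^2 l^2/(2F).\<close>

lemma near_quadratic_pos:
  assumes nq: "near_quadratic \<phi> \<phi>' \<phi>'' r A F c l" and F: "F > 0" and c: "c > 0" and A: "A > 0"
    and l: "0 < l" "c*l \<le> F/2" "l*(c + c^2/(2*F)) < A"
    and y: "\<bar>y\<bar> < min r (F/(2*c))"
  shows "\<phi> y > 0"
proof -
  have err: "\<bar>\<phi> y - (A*l + F*y^2)\<bar> \<le> c*l^2 + c*l*\<bar>y\<bar> + c*(\<bar>y\<bar>+l)*y^2/2"
    using near_quadratic_approx[OF nq] y c by auto
  have "c*\<bar>y\<bar> \<le> F/2" using y c by (simp add: field_simps)
  then have "c*(\<bar>y\<bar>+l) \<le> F" using l by (simp add: algebra_simps)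
  then have "c*(\<bar>y\<bar>+l)*y^2/2 \<le> F*y^2/2" by (simp add: mult_right_mono)
  moreover have "F*y^2/2 - c*l*\<bar>y\<bar> + c^2*l^2/(2*F) = (F/2)*(\<bar>y\<bar> - c*l/F)^2"
    using F by (simp add: field_simps power2_eq_square)
  moreover have "(F/2)*(\<bar>y\<bar> - c*l/F)^2 \<ge> 0" using F by simp
  moreover have "l*(A - l*(c + c^2/(2*F))) > 0" using l by simp
  moreover have "l*(A - l*(c + c^2/(2*F))) = A*l - c*l^2 - c^2*l^2/(2*F)"
    by (simp add: field_simps power2_eq_square)
  ultimately show ?thesis using err by linarith
qed

text \<open>For |y| < F/(2c) the bound on \<phi>'' makes \<phi> strictly convex; being negative at 0, it has
  at most one positive zero.\<close>

lemma near_quadratic_unique_pos_root: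
  assumes nq: "near_quadratic \<phi> \<phi>' \<phi>'' r A F c l" and F: "F > 0" and c: "c > 0"
    and neg: "\<phi> 0 < 0" and l: "0 < l" "c*l < F"
    and y: "0 < y1" "y1 < min r (F/(2*c))" "\<phi> y1 = 0" "0 < y2" "y2 < min r (F/(2*c))" "\<phi> y2 = 0"
  shows "y1 = y2"
proof -
  define \<delta> where "\<delta> = min r (F/(2*c))"
  have d1: "\<And>y. \<bar>y\<bar> < \<delta> \<Longrightarrow> (\<phi> has_real_derivative \<phi>' y) (at y)"
   and d2: "\<And>y. \<bar>y\<bar> < \<delta> \<Longrightarrow> (\<phi>' has_real_derivative \<phi>'' y) (at y)"
   and b2: "\<And>y. \<bar>y\<bar> < \<delta> \<Longrightarrow> \<bar>\<phi>'' y - 2*F\<bar> \<le> c*(\<bar>y\<bar>+l)"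
    using nq unfolding near_quadratic_def \<delta>_def by auto
  have convex: "\<phi>'' y > 0" if "\<bar>y\<bar> < \<delta>" for y
  proof -
    have "c*\<bar>y\<bar> < F/2" using that c unfolding \<delta>_def by (simp add: field_simps)
    then show ?thesis using b2[OF that] l by (simp add: algebra_simps abs_le_iff)
  qed
  have False if less: "u < v" and uv: "0 < u" "v < \<delta>" "\<phi> u = 0" "\<phi> v = 0" for u v
  proof -
    obtain z1 where z1: "0 < z1" "z1 < u" "\<phi> u - \<phi> 0 = (u - 0) * \<phi>' z1"
      using MVT2[of 0 u \<phi> \<phi>'] d1 less uv by force
    obtain z2 where z2: "u < z2" "z2 < v" "\<phi> v - \<phi> u = (v - u) * \<phi>' z2"
      using MVT2[of u v \<phi> \<phi>'] d1 less uv by force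
    obtain w where w: "z1 < w" "w < z2" "\<phi>' z2 - \<phi>' z1 = (z2 - z1) * \<phi>'' w"
      using MVT2[of z1 z2 \<phi>' \<phi>''] d2 z1 z2 uv by force
    have "\<phi>' z1 > 0" using z1 neg uv by (metis diff_0_right diff_gt_0_iff_gt zero_less_mult_pos)
    moreover have "\<phi>' z2 = 0" using z2 uv by simp
    moreover have "\<phi>'' w > 0" using convex[of w] w z1 z2 uv by auto
    ultimately show False using w by (smt (verit) mult_pos_pos)
  qed
  then show ?thesis using y unfolding \<delta>_def by (metis linorder_neqE_linordered_idom)
qed

text \<open>For A < 0 the zeros are sought in the form y = d s + t s^2 with s = \<surd>l and
  d = \<surd>(-A/F), so that A l + F y^2 = F (2 d t s^3 + t^2 s^4). The error of
  \<open>near_quadratic_approx\<close> is then at most M s^3, so with K = M/(F d) + 1 the value at t = K is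
  positive and the value at t = -K negative.\<close>

lemma near_quadratic_error_cubic:
  fixes c d s t K y :: real
  assumes c: "c > 0" and d: "d > 0" and s: "0 < s" "s \<le> 1" "K * s \<le> 1" and t: "\<bar>t\<bar> \<le> K"
    and y: "y = d * s + t * s^2"
  shows "\<bar>y\<bar> \<le> (d+1) * s"
    and "c*(s^2)^2 + c* s^2*\<bar>y\<bar> + c*(\<bar>y\<bar>+s^2)*y^2/2 \<le> c*(2 + d + (d+2)*(d+1)^2/2) * s^3"
proof -
  have "\<bar>t\<bar> * s \<le> 1" using t s by (smt (verit) mult_right_mono)
  then have "\<bar>t * s^2\<bar> \<le> s" using s by (simp add: abs_mult power2_eq_square)
  moreover have "\<bar>y\<bar> \<le> \<bar>d * s\<bar> + \<bar>t * s^2\<bar>" using y abs_triangle_ineq by simp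
  moreover have "\<bar>d * s\<bar> = d * s" using d s by simp
  ultimately show ya: "\<bar>y\<bar> \<le> (d+1) * s" by (simp add: algebra_simps)
  have s2: "s^2 \<le> s" using s by (simp add: power2_eq_square mult_left_le)
  have "(s^2)^2 \<le> s^3" using s by (simp add: power_decreasing flip: power_mult)
  then have a1: "c*(s^2)^2 \<le> c* s^3" using c by simp
  have a2: "c* s^2*\<bar>y\<bar> \<le> c* s^2*((d+1)* s)" using ya c by (simp add: mult_left_mono)
  have yy: "y^2 \<le> ((d+1)* s)^2" using ya by (metis abs_ge_zero power2_abs power_mono)
  have ys: "\<bar>y\<bar>+s^2 \<le> (d+2)* s" using ya s2 by (simp add: algebra_simps)
  have "(\<bar>y\<bar>+s^2)*y^2 \<le> ((d+2)* s)*((d+1)* s)^2"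
    by (rule mult_mono[OF ys yy]) (use d s in auto)
  then have a3: "c*(\<bar>y\<bar>+s^2)*y^2/2 \<le> c*(((d+2)* s)*((d+1)* s)^2)/2"
    using mult_left_mono[of _ _ c] c by simp
  have "c*(2 + d + (d+2)*(d+1)^2/2) * s^3 = c* s^3 + c* s^2*((d+1)* s) + c*(((d+2)* s)*((d+1)* s)^2)/2"
    by (simp add: algebra_simps power2_eq_square power3_eq_cube)
  then show "c*(s^2)^2 + c* s^2*\<bar>y\<bar> + c*(\<bar>y\<bar>+s^2)*y^2/2 \<le> c*(2 + d + (d+2)*(d+1)^2/2) * s^3"
    using a1 a2 a3 by linarith
qed

lemma near_quadratic_ansatz:
  assumes nq: "near_quadratic \<phi> \<phi>' \<phi>'' r A F c l" and F: "F > 0" and c: "c > 0" and A: "A < 0"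
    and d: "d = sqrt (-A/F)" and M: "M = c*(2 + d + (d+2)*(d+1)^2/2)"
    and l: "0 < l" and s: "s = sqrt l" "s \<le> 1" "K * s \<le> 1" "(d+1) * s < r" and t: "\<bar>t\<bar> \<le> K"
  shows "\<bar>d* s + t* s^2\<bar> \<le> (d+1) * s"
    and "\<bar>\<phi> (d* s + t* s^2) - F*(2*d*t* s^3 + t^2* s^4)\<bar> \<le> M * s^3"
proof -
  have s0: "0 < s" and ls: "l = s^2" using s l by simp_all
  have d0: "d > 0" using d A F by (simp add: divide_neg_pos)
  have Fd: "F*d^2 = -A" using d A F by (simp add: divide_neg_pos less_eq_real_def)
  note bounds = near_quadratic_error_cubic[OF c d0 s0 s(2,3) t refl]
  show "\<bar>d* s + t* s^2\<bar> \<le> (d+1) * s" by (rule bounds(1))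
  then have "\<bar>\<phi> (d* s + t* s^2) - (A*l + F*(d* s + t* s^2)^2)\<bar> \<le> M * s^3"
    using near_quadratic_approx[OF nq, of "d* s + t* s^2"] c s(4) bounds(2) unfolding ls M by simp
  moreover have "F*(d* s + t* s^2)^2 = (F*d^2)* s^2 + F*(2*d*t* s^3 + t^2* s^4)"
    by (simp add: algebra_simps power2_eq_square power3_eq_cube power4_eq_xxxx)
  ultimately show "\<bar>\<phi> (d* s + t* s^2) - F*(2*d*t* s^3 + t^2* s^4)\<bar> \<le> M * s^3"
    unfolding ls using Fd by simp
qed

lemma near_quadratic_pos_root_exists:
  assumes nq: "near_quadratic \<phi> \<phi>' \<phi>'' r A F c l" and F: "F > 0" and c: "c > 0" and A: "A < 0"
    and d: "d = sqrt (-A/F)" and M: "M = c*(2 + d + (d+2)*(d+1)^2/2)" and K: "K = M/(F*d) + 1"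
    and l: "0 < l" and s: "s = sqrt l" "s \<le> 1" "K * s \<le> 1" "K^2 * s \<le> 2*d" "K * s < d"
      "(d+1) * s < min r (F/(2*c))"
  shows "\<exists>y. 0 < y \<and> y < min r (F/(2*c)) \<and> \<phi> y = 0 \<and> \<bar>y - d * s\<bar> \<le> K*l"
proof -
  have s0: "0 < s" and ls: "l = s^2" and s3: "s^3 > 0" using s l by simp_all
  have d0: "d > 0" using d A F by (simp add: divide_neg_pos)
  have M0: "M > 0" using M c d0 by (simp add: add_pos_nonneg)
  have K0: "K > 0" using K M0 F d0 by (simp add: add_pos_nonneg)
  have FdK: "F*d*K = M + F*d" using K F d0 by (simp add: field_simps)
  have sr: "(d+1) * s < r" using s(6) by simp
  note ansatz = near_quadratic_ansatz[OF nq F c A d M l s(1-3) sr]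
  have "F*(2*d*K* s^3 + K^2* s^4) \<ge> 2*(F*d*K)* s^3"
    using F by (simp add: algebra_simps)
  then have "F*(2*d*K* s^3 + K^2* s^4) \<ge> 2*(M + F*d)* s^3"
    using FdK by simp
  then have pos: "\<phi> (d* s + K* s^2) > 0"
    using ansatz(2)[of K] K0 mult_pos_pos[OF mult_pos_pos[OF F d0] s3]
    by (simp add: abs_le_iff algebra_simps)
  have "K^2* s^4 = (K^2* s)* s^3" by (simp add: power_def algebra_simps)
  also have "\<dots> \<le> (2*d)* s^3" using s(4) s3 by (simp add: mult_right_mono)
  finally have "F*(K^2* s^4) \<le> F*((2*d)* s^3)" using F by simp
  moreover have "F*(2*d*(-K)* s^3 + (-K)^2* s^4) = -2*(F*d*K)* s^3 + F*(K^2* s^4)"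
    by (simp add: algebra_simps)
  ultimately have "F*(2*d*(-K)* s^3 + (-K)^2* s^4) \<le> -2*(M + F*d)* s^3 + F*((2*d)* s^3)"
    unfolding FdK by linarith
  then have neg: "\<phi> (d* s + (-K)* s^2) < 0"
    using ansatz(2)[of "-K"] K0 mult_pos_pos[OF M0 s3] by (simp add: abs_le_iff algebra_simps)
  have lo: "0 < d* s + (-K)* s^2" using s(5) s0 by (simp add: power2_eq_square)
  have hi: "d* s + K* s^2 \<le> (d+1)* s" using ansatz(1)[of K] K0 by simp
  have "continuous_on {d* s + (-K)* s^2 .. d* s + K* s^2} \<phi>"
  proof (intro continuous_at_imp_continuous_on ballI)
    fix x assume "x \<in> {d* s + (-K)* s^2 .. d* s + K* s^2}"
    then have "\<bar>x\<bar> < r" using lo hi sr by auto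
    then show "isCont \<phi> x" using nq unfolding near_quadratic_def by (auto intro: DERIV_isCont)
  qed
  then obtain x where x: "d* s + (-K)* s^2 \<le> x" "x \<le> d* s + K* s^2" "\<phi> x = 0"
    using IVT'[of \<phi> "d* s + (-K)* s^2" 0 "d* s + K* s^2"] pos neg K0 by auto
  then show ?thesis using lo hi s(6) unfolding ls by (intro exI[of _ x]) (auto simp: abs_le_iff)
qed

lemma near_quadratic_roots:
  assumes nq: "near_quadratic \<phi> \<phi>' \<phi>'' r A F c l" and F: "F > 0" and c: "c > 0" and A: "A < 0"
    and d: "d = sqrt (-A/F)" and M: "M = c*(2 + d + (d+2)*(d+1)^2/2)" and K: "K = M/(F*d) + 1"
    and l: "0 < l" "c*l < -A" "c*l < F"
    and s: "sqrt l \<le> 1" "K * sqrt l \<le> 1" "K^2 * sqrt l \<le> 2*d" "K * sqrt l < d"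
      "(d+1) * sqrt l < min r (F/(2*c))"
  shows "\<exists>yp ym. {y. \<bar>y\<bar> < min r (F/(2*c)) \<and> \<phi> y = 0} = {yp, ym} \<and>
           \<bar>yp - d * sqrt l\<bar> \<le> K*l \<and> \<bar>ym + d * sqrt l\<bar> \<le> K*l"
proof -
  define \<delta> where "\<delta> = min r (F/(2*c))"
  have "(A + c*l)*l < 0" using l by (simp add: mult_neg_pos)
  then have "A*l + c*l^2 < 0" by (simp add: algebra_simps power2_eq_square)
  moreover have "\<phi> 0 \<le> A*l + c*l^2" using nq unfolding near_quadratic_def by (simp add: abs_le_iff)
  ultimately have neg: "\<phi> 0 < 0" by linarith
  note nq' = near_quadratic_reflect[OF nq]
  obtain yp where yp: "0 < yp" "yp < \<delta>" "\<phi> yp = 0" "\<bar>yp - d * sqrt l\<bar> \<le> K*l"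
    using near_quadratic_pos_root_exists[OF nq F c A d M K l(1) refl s] unfolding \<delta>_def by blast
  obtain ym where ym: "0 < ym" "ym < \<delta>" "\<phi> (-ym) = 0" "\<bar>ym - d * sqrt l\<bar> \<le> K*l"
    using near_quadratic_pos_root_exists[OF nq' F c A d M K l(1) refl s] unfolding \<delta>_def by blast
  have "{y. \<bar>y\<bar> < \<delta> \<and> \<phi> y = 0} = {yp, -ym}"
  proof (intro equalityI subsetI)
    fix y assume "y \<in> {y. \<bar>y\<bar> < \<delta> \<and> \<phi> y = 0}"
    then have y: "\<bar>y\<bar> < \<delta>" "\<phi> y = 0" by auto
    consider "y > 0" | "y < 0" using y neg by force
    then show "y \<in> {yp, -ym}"
    proof cases
      case 1
      then have "y = yp"
        using near_quadratic_unique_pos_root[OF nq F c neg l(1,3)] y yp unfolding \<delta>_def by auto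
      then show ?thesis by simp
    next
      case 2
      then have "-y = ym"
        using near_quadratic_unique_pos_root[OF nq' F c _ l(1,3), of "-y" ym] neg y ym
        unfolding \<delta>_def by auto
      then show ?thesis by auto
    qed
  qed (use yp ym in auto)
  then show ?thesis
    using yp ym unfolding \<delta>_def by (intro exI[of _ yp] exI[of _ "-ym"]) (auto simp: abs_minus_commute)
qed

lemma eventually_at_right_0_less: "e > 0 \<Longrightarrow> \<forall>\<^sub>F l in at_right (0::real). l < e"
  using order_tendstoD(2)[OF tendsto_ident_at, of 0 e "{0<..}"] by simp

lemma eventually_at_right_0_sqrt_less: "e > 0 \<Longrightarrow> \<forall>\<^sub>F l in at_right (0::real). sqrt l < e"
proof -
  assume "e > 0"
  moreover have "((\<lambda>l. sqrt l) \<longlongrightarrow> sqrt 0) (at_right (0::real))"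
    by (intro tendsto_real_sqrt tendsto_ident_at)
  ultimately show ?thesis using order_tendstoD(2) by fastforce
qed

lemma near_quadratic_family_no_roots:
  assumes F: "F > 0" and c: "c > 0" and r: "r > 0" and A: "A > 0"
    and ev: "\<forall>\<^sub>F l in at_right 0. near_quadratic (\<phi> l) (\<phi>' l) (\<phi>'' l) r A F c l"
  shows "\<exists>\<delta>>0. \<forall>\<^sub>F l in at_right 0. \<forall>y. \<bar>y\<bar> < \<delta> \<longrightarrow> \<phi> l y \<noteq> 0"
proof (intro exI conjI)
  show "min r (F/(2*c)) > 0" using F c r by simp
  have e: "F/(2*c) > 0" "A/(c + c^2/(2*F)) > 0"
    using F c A by (auto intro!: divide_pos_pos add_pos_pos)
  show "\<forall>\<^sub>F l in at_right 0. \<forall>y. \<bar>y\<bar> < min r (F/(2*c)) \<longrightarrow> \<phi> l y \<noteq> 0"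
    using ev eventually_at_right_less[of 0] eventually_at_right_0_less[OF e(1)]
      eventually_at_right_0_less[OF e(2)]
  proof eventually_elim
    case (elim l)
    have "c*l \<le> F/2" using elim c by (simp add: field_simps)
    moreover have "l*(c + c^2/(2*F)) < A"
      using elim(4) F c by (simp add: field_simps add_pos_pos)
    ultimately show ?case using near_quadratic_pos[OF elim(1) F c A elim(2)] by force
  qed
qed

lemma near_quadratic_family_two_roots:
  assumes F: "F > 0" and c: "c > 0" and r: "r > 0" and A: "A < 0"
    and ev: "\<forall>\<^sub>F l in at_right 0. near_quadratic (\<phi> l) (\<phi>' l) (\<phi>'' l) r A F c l"
  shows "\<exists>\<delta>>0. \<exists>xp xm :: real \<Rightarrow> real.
           (\<forall>\<^sub>F l in at_right 0. {y. \<bar>y\<bar> < \<delta> \<and> \<phi> l y = 0} = {xp l, xm l}) \<and>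
           (\<lambda>l. xp l - sqrt (-A/F) * sqrt l) \<in> O[at_right 0](\<lambda>l. l) \<and>
           (\<lambda>l. xm l - (- sqrt (-A/F)) * sqrt l) \<in> O[at_right 0](\<lambda>l. l)"
proof -
  define \<delta> where "\<delta> = min r (F/(2*c))"
  define d where "d = sqrt (-A/F)"
  define M where "M = c*(2 + d + (d+2)*(d+1)^2/2)"
  define K where "K = M/(F*d) + 1"
  have \<delta>0: "\<delta> > 0" using F c r by (simp add: \<delta>_def)
  have d0: "d > 0" using A F by (simp add: d_def divide_neg_pos)
  have K0: "K > 0" using c d0 F by (simp add: K_def M_def add_pos_nonneg)
  define roots where "roots l y \<longleftrightarrow> {z. \<bar>z\<bar> < \<delta> \<and> \<phi> l z = 0} = {fst y, snd y} \<and>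
      \<bar>fst y - d * sqrt l\<bar> \<le> K*l \<and> \<bar>snd y + d * sqrt l\<bar> \<le> K*l" for l y
  have e: "-A/c > 0" "F/c > 0" "1/K > 0" "2*d/K^2 > 0" "d/K > 0" "\<delta>/(d+1) > 0"
    using A F c K0 d0 \<delta>0 by (auto simp: divide_neg_pos)
  have "\<forall>\<^sub>F l in at_right 0. \<exists>y. roots l y"
    using ev eventually_at_right_less[of 0] eventually_at_right_0_less[OF e(1)]
      eventually_at_right_0_less[OF e(2)] eventually_at_right_0_sqrt_less[OF zero_less_one]
      eventually_at_right_0_sqrt_less[OF e(3)] eventually_at_right_0_sqrt_less[OF e(4)]
      eventually_at_right_0_sqrt_less[OF e(5)] eventually_at_right_0_sqrt_less[OF e(6)]
  proof eventually_elim
    case (elim l)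
    have "c*l < -A" "c*l < F" using elim(3,4) c by (simp_all add: field_simps)
    moreover have "K * sqrt l \<le> 1" "K^2 * sqrt l \<le> 2*d" "K * sqrt l < d" "(d+1) * sqrt l < \<delta>"
      using elim(6-9) K0 d0 by (simp_all add: field_simps)
    ultimately show ?case
      using near_quadratic_roots[OF elim(1) F c A d_def M_def K_def elim(2)] elim(5)
      unfolding roots_def \<delta>_def by fastforce
  qed
  then obtain Y where evr: "\<forall>\<^sub>F l in at_right 0. roots l (Y l)"
    unfolding eventually_ex by blast
  define xp where "xp l = fst (Y l)" for l
  define xm where "xm l = snd (Y l)" for l
  have bounds: "\<forall>\<^sub>F l in at_right 0. \<bar>xp l - d * sqrt l\<bar> \<le> K * \<bar>l\<bar> \<and> \<bar>xm l + d * sqrt l\<bar> \<le> K * \<bar>l\<bar>"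
    using evr eventually_at_right_less[of 0] by eventually_elim (auto simp: roots_def xp_def xm_def)
  have "(\<lambda>l. xp l - d * sqrt l) \<in> O[at_right 0](\<lambda>l. l)"
    by (rule bigoI[where c = K], rule eventually_mono[OF bounds]) auto
  moreover have "(\<lambda>l. xm l - (- d) * sqrt l) \<in> O[at_right 0](\<lambda>l. l)"
    by (rule bigoI[where c = K], rule eventually_mono[OF bounds]) auto
  moreover have "\<forall>\<^sub>F l in at_right 0. {y. \<bar>y\<bar> < \<delta> \<and> \<phi> l y = 0} = {xp l, xm l}"
    by (rule eventually_mono[OF evr]) (simp add: roots_def xp_def xm_def)
  ultimately show ?thesis
    unfolding d_def by (intro exI[of _ \<delta>] exI[of _ xp] exI[of _ xm] conjI \<delta>0)
qed

text \<open>The case F < 0 reduces to F > 0 by negating \<phi>.\<close>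

lemma near_quadratic_family_saddle_node:
  assumes F: "F \<noteq> 0" and c: "c > 0" and r: "r > 0"
    and ev: "\<forall>\<^sub>F l in at_right 0. near_quadratic (\<phi> l) (\<phi>' l) (\<phi>'' l) r A F c l"
  shows "(A/F > 0 \<longrightarrow> (\<exists>\<delta>>0. \<forall>\<^sub>F l in at_right 0. \<forall>y. \<bar>y\<bar> < \<delta> \<longrightarrow> \<phi> l y \<noteq> 0))
   \<and> (A/F < 0 \<longrightarrow> (\<exists>\<delta>>0. \<exists>xp xm :: real \<Rightarrow> real.
              (\<forall>\<^sub>F l in at_right 0. {y. \<bar>y\<bar> < \<delta> \<and> \<phi> l y = 0} = {xp l, xm l}) \<and>
              (\<lambda>l. xp l - sqrt (-A/F) * sqrt l) \<in> O[at_right 0](\<lambda>l. l) \<and>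
              (\<lambda>l. xm l - (- sqrt (-A/F)) * sqrt l) \<in> O[at_right 0](\<lambda>l. l)))"
proof (cases "F > 0")
  case True
  then have "A/F > 0 \<longleftrightarrow> A > 0" "A/F < 0 \<longleftrightarrow> A < 0"
    by (auto simp: zero_less_divide_iff divide_less_0_iff)
  then show ?thesis
    using near_quadratic_family_no_roots[OF True c r _ ev]
      near_quadratic_family_two_roots[OF True c r _ ev] by simp
next
  case False
  then have F': "-F > 0" using F by simp
  have ev': "\<forall>\<^sub>F l in at_right 0.
      near_quadratic (\<lambda>y. - \<phi> l y) (\<lambda>y. - \<phi>' l y) (\<lambda>y. - \<phi>'' l y) r (-A) (-F) c l"
    using ev by eventually_elim (rule near_quadratic_uminus)
  have "A/F > 0 \<longleftrightarrow> -A > 0" "A/F < 0 \<longleftrightarrow> -A < 0" using False F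
    by (auto simp: zero_less_divide_iff divide_less_0_iff)
  moreover have "-(-A)/(-F) = -A/F" by simp
  ultimately show ?thesis
    using near_quadratic_family_no_roots[OF F' c r _ ev']
      near_quadratic_family_two_roots[OF F' c r _ ev'] by simp
qed

lemma near_quadratic_restriction:
  fixes g :: "'a::euclidean_space \<Rightarrow> real" and w E V :: 'a
  assumes g: "smooth g"
    and lip: "\<And>h u v. h \<in> {g, dir_deriv g E, dir_deriv (dir_deriv g E) E} \<Longrightarrow>
                norm u \<le> 1 \<Longrightarrow> norm v \<le> 1 \<Longrightarrow> \<bar>h u - h v\<bar> \<le> K * norm (u - v)"
    and K: "K \<ge> 0" and ray: "\<bar>g (l *\<^sub>R V) - A*l\<bar> \<le> K * l^2"
    and g1: "dir_deriv g E 0 = 0" and g2: "dir_deriv (dir_deriv g E) E 0 = 2*F"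
    and w: "norm (w - l *\<^sub>R V) \<le> C * l^2" and C: "C \<ge> 0"
    and l: "0 < l" "l \<le> 1" "(C + norm V) * l \<le> 1/2" and r: "r * norm E \<le> 1/2"
  shows "near_quadratic (\<lambda>y. g (w + y *\<^sub>R E)) (\<lambda>y. dir_deriv g E (w + y *\<^sub>R E))
           (\<lambda>y. dir_deriv (dir_deriv g E) E (w + y *\<^sub>R E)) r A F
           (K * (C + norm V + norm E + 1) + 1) l"
proof -
  define P where "P = C + norm V + norm E + 1"
  have scale: "K * a \<le> (K * P + 1) * x" if "0 \<le> x" "a \<le> P * x" for a x
    using mult_left_mono[OF that(2) K] that(1) by (simp add: algebra_simps)
  have l2: "l^2 \<le> l" using l by (simp add: power2_eq_square mult_left_le)
  have "norm w \<le> norm (w - l *\<^sub>R V) + norm (l *\<^sub>R V)"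
    using norm_triangle_sub[of w "l *\<^sub>R V"] by simp
  also have "\<dots> \<le> C * l + l * norm V" using w l2 C l mult_left_mono[OF l2 C] by simp
  finally have nw: "norm w \<le> (C + norm V) * l" by (simp add: algebra_simps)
  have nwy: "norm (w + y *\<^sub>R E) \<le> (C + norm V) * l + \<bar>y\<bar> * norm E" for y
    using norm_triangle_ineq[of w "y *\<^sub>R E"] nw by simp
  have unit: "norm (w + y *\<^sub>R E) \<le> 1" if "\<bar>y\<bar> < r" for y
    using nwy[of y] mult_right_mono[of "\<bar>y\<bar>" r "norm E"] that l(3) r by simp
  have "C * l \<ge> 0" using C l by simp
  then have unit_lV: "norm (l *\<^sub>R V) \<le> 1" using l by (simp add: algebra_simps)
  show ?thesis unfolding near_quadratic_def P_def[symmetric]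
  proof (intro conjI allI impI)
    fix y :: real assume y: "\<bar>y\<bar> < r"
    show "((\<lambda>y. g (w + y *\<^sub>R E)) has_real_derivative dir_deriv g E (w + y *\<^sub>R E)) (at y)"
      by (rule smooth_has_real_derivative_line[OF g])
    show "((\<lambda>y. dir_deriv g E (w + y *\<^sub>R E)) has_real_derivative
            dir_deriv (dir_deriv g E) E (w + y *\<^sub>R E)) (at y)"
      by (rule smooth_has_real_derivative_line[OF smooth_dir_deriv[OF g]])
    have "\<bar>dir_deriv (dir_deriv g E) E (w + y *\<^sub>R E) - 2*F\<bar> \<le> K * norm (w + y *\<^sub>R E)"
      using lip[of "dir_deriv (dir_deriv g E) E" "w + y *\<^sub>R E" 0] unit[OF y] g2 by simp
    also have "\<dots> \<le> K * ((C + norm V) * l + \<bar>y\<bar> * norm E)"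
      using nwy K by (simp add: mult_left_mono)
    also have "\<dots> \<le> (K * P + 1) * (\<bar>y\<bar> + l)"
    proof (rule scale)
      have "0 \<le> (C + norm V) * \<bar>y\<bar> + norm E * l + \<bar>y\<bar> + l" using C l by simp
      then show "(C + norm V) * l + \<bar>y\<bar> * norm E \<le> P * (\<bar>y\<bar> + l)"
        by (simp add: P_def algebra_simps)
    qed (use l in simp)
    finally show "\<bar>dir_deriv (dir_deriv g E) E (w + y *\<^sub>R E) - 2*F\<bar> \<le> (K * P + 1) * (\<bar>y\<bar> + l)" .
  next
    have "\<bar>dir_deriv g E w\<bar> \<le> K * norm w"
      using lip[of "dir_deriv g E" w 0] nw l(3) g1 by simp
    also have "\<dots> \<le> (K * P + 1) * l"
      by (rule scale) (use l nw in \<open>auto simp: P_def intro: order.trans mult_right_mono\<close>)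
    finally show "\<bar>dir_deriv g E (w + 0 *\<^sub>R E)\<bar> \<le> (K * P + 1) * l" by simp
  next
    have "\<bar>g w - g (l *\<^sub>R V)\<bar> \<le> K * (C * l^2)"
      using lip[of g w "l *\<^sub>R V"] nw l(3) unit_lV w K by (auto intro: order.trans mult_left_mono)
    then have "\<bar>g w - A*l\<bar> \<le> K * ((C + 1) * l^2)" using ray by (simp add: algebra_simps)
    also have "\<dots> \<le> (K * P + 1) * l^2"
      by (rule scale) (simp_all add: P_def mult_right_mono)
    finally show "\<bar>g (w + 0 *\<^sub>R E) - A*l\<bar> \<le> (K * P + 1) * l^2" by simp
  qed
qed

lemma eventually_near_quadratic_restriction:
  fixes g :: "'a::euclidean_space \<Rightarrow> real" and W :: "real \<Rightarrow> 'a"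
  assumes g: "smooth g" and g0: "g 0 = 0" and g1: "dir_deriv g E 0 = 0"
    and g2: "dir_deriv (dir_deriv g E) E 0 = 2*F" and A: "dir_deriv g V 0 = A"
    and C: "C \<ge> 0" and W: "\<forall>\<^sub>F l in at_right 0. norm (W l - l *\<^sub>R V) \<le> C * l^2"
  shows "\<exists>r>0. \<exists>c>0. \<forall>\<^sub>F l in at_right 0.
           near_quadratic (\<lambda>y. g (W l + y *\<^sub>R E)) (\<lambda>y. dir_deriv g E (W l + y *\<^sub>R E))
             (\<lambda>y. dir_deriv (dir_deriv g E) E (W l + y *\<^sub>R E)) r A F c l"
proof -
  obtain K where K: "K \<ge> 0"
    and lip: "\<And>h u v. h \<in> {g, dir_deriv g E, dir_deriv (dir_deriv g E) E} \<Longrightarrow>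
       norm u \<le> 1 \<Longrightarrow> norm v \<le> 1 \<Longrightarrow> \<bar>h u - h v\<bar> \<le> K * norm (u - v)"
    and ray: "\<And>t. 0 \<le> t \<Longrightarrow> t * norm V \<le> 1 \<Longrightarrow>
       \<bar>g (t *\<^sub>R V) - g 0 - t * dir_deriv g V 0\<bar> \<le> K * t^2"
    using smooth_common_constant[OF g] by blast
  define r where "r = 1 / (2 * (norm E + 1))"
  have r: "r > 0" "r * norm E \<le> 1/2" by (simp_all add: r_def field_simps add_pos_nonneg)
  have P: "C + norm V + 1 > 0" using C norm_ge_zero[of V] by linarith
  then have e: "1 / (2 * (C + norm V + 1)) > 0" by simp
  have "\<forall>\<^sub>F l in at_right 0.
      near_quadratic (\<lambda>y. g (W l + y *\<^sub>R E)) (\<lambda>y. dir_deriv g E (W l + y *\<^sub>R E))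
        (\<lambda>y. dir_deriv (dir_deriv g E) E (W l + y *\<^sub>R E)) r A F (K * (C + norm V + norm E + 1) + 1) l"
    using W eventually_at_right_less[of 0] eventually_at_right_0_less[OF zero_less_one]
      eventually_at_right_0_less[OF e]
  proof eventually_elim
    case (elim l)
    have "2 * (C + norm V + 1) * l < 1" using elim(4) P by (simp add: field_simps)
    then have small: "(C + norm V) * l \<le> 1/2" using elim(2) by (simp add: algebra_simps)
    have "C * l \<ge> 0" using C elim(2) by simp
    with small have "l * norm V \<le> 1" by (simp add: algebra_simps)
    then have "\<bar>g (l *\<^sub>R V) - A*l\<bar> \<le> K * l^2"
      using ray[of l] elim(2) g0 A by (simp add: algebra_simps)
    then show ?case
      using near_quadratic_restriction[OF g lip K _ g1 g2 elim(1) C elim(2)] small elim(3) r(2)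
      by simp
  qed
  moreover have "K * (C + norm V + norm E + 1) + 1 > 0"
  proof -
    have "C + norm V + norm E + 1 \<ge> 0" using P norm_ge_zero[of E] by linarith
    then show ?thesis using mult_nonneg_nonneg[OF K] by (smt (verit))
  qed
  ultimately show ?thesis using r(1) by blast
qed

text \<open>In the p-th equation the arguments \<sigma> \<in> L_p of f carry the unknown x_p, the others the
  upstream values x_{\<sigma>(p)}(\<lambda>); the latter are d_{\<sigma>(p)} \<lambda> + O(\<lambda>^2) by (H) with \<Xi>_p = 0.\<close>

definition loop_dir :: "('s::finite \<Rightarrow> 'c \<Rightarrow> 'c) \<Rightarrow> 'c \<Rightarrow> (real^'s) \<times> real" where
  "loop_dir sg p = ((\<chi> s. if s \<in> Lp sg p then 1 else 0), 0)"

definition upstream ::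
  "('s::finite \<Rightarrow> 'c \<Rightarrow> 'c) \<Rightarrow> ('c \<Rightarrow> real \<Rightarrow> real) \<Rightarrow> 'c \<Rightarrow> real \<Rightarrow> (real^'s) \<times> real" where
  "upstream sg xs p l = ((\<chi> s. if s \<in> Lp sg p then 0 else xs (sg s p) l), l)"

definition drive_dir :: "('s::finite \<Rightarrow> 'c \<Rightarrow> 'c) \<Rightarrow> ('c \<Rightarrow> real) \<Rightarrow> 'c \<Rightarrow> (real^'s) \<times> real" where
  "drive_dir sg d p = ((\<chi> s. if s \<in> Lp sg p then 0 else d (sg s p)), 1)"

definition arg_axis :: "'s::finite \<Rightarrow> (real^'s) \<times> real" where
  "arg_axis s = (axis s 1, 0)"

lemma peq_eq_upstream: "peq f sg xs p y l = f (upstream sg xs p l + y *\<^sub>R loop_dir sg p)"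
proof -
  have "(\<chi> s. ((\<lambda>c. xs c l)(p := y)) (sg s p), l) = upstream sg xs p l + y *\<^sub>R loop_dir sg p"
    unfolding upstream_def loop_dir_def by (simp add: prod_eq_iff vec_eq_iff Lp_def)
  then show ?thesis unfolding peq_def gamma_def by simp
qed

lemma axis_eq_scaleR_arg_axis: "(axis s (t::real), 0::real) = t *\<^sub>R arg_axis s"
  by (simp add: arg_axis_def vec_eq_iff axis_def)

lemma sum_scaleR_arg_axis:
  "(\<Sum>s\<in>S. c s *\<^sub>R arg_axis s) = ((\<chi> i. if i \<in> S then c i else 0), 0)"
proof -
  have "(\<Sum>s\<in>S. c s *\<^sub>R axis s 1) $ i = (\<Sum>s\<in>S. c s * (axis s 1 $ i))" for i
    by simp
  also have "\<dots> i = (\<Sum>s\<in>S. if s = i then c s else 0)" for i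
    by (rule sum.cong) (auto simp: axis_def)
  finally have "(\<Sum>s\<in>S. c s *\<^sub>R axis s 1) $ i = (if i \<in> S then c i else 0)" for i
    by (simp add: sum.delta')
  then show ?thesis by (simp add: arg_axis_def prod_eq_iff vec_eq_iff fst_sum snd_sum)
qed

lemma acoef_eq_dir_deriv: "smooth f \<Longrightarrow> acoef f s = dir_deriv f (arg_axis s) 0"
  using deriv_line_eq_dir_deriv[of f 0 "arg_axis s" 0] by (simp add: acoef_def axis_eq_scaleR_arg_axis)

lemma lcoef_eq_dir_deriv: "smooth f \<Longrightarrow> lcoef f = dir_deriv f (0, 1) 0"
  using deriv_line_eq_dir_deriv[of f 0 "(0, 1)" 0] by (simp add: lcoef_def zero_prod_def)

lemma fcoef_eq_dir_deriv:
  assumes "smooth f"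
  shows "2 * fcoef f s t = dir_deriv (dir_deriv f (arg_axis t)) (arg_axis s) 0"
proof -
  have "deriv (\<lambda>v. f (axis s u + axis t v, 0)) 0 = dir_deriv f (arg_axis t) (0 + u *\<^sub>R arg_axis s)"
    for u
  proof -
    have "(axis s u + axis t v, 0::real) = u *\<^sub>R arg_axis s + v *\<^sub>R arg_axis t" for v
      by (simp add: arg_axis_def prod_eq_iff vec_eq_iff axis_def)
    then show ?thesis using deriv_line_eq_dir_deriv[OF assms, of "u *\<^sub>R arg_axis s" "arg_axis t" 0] by simp
  qed
  then show ?thesis
    unfolding fcoef_def using deriv_line_eq_dir_deriv[OF smooth_dir_deriv[OF assms], of "arg_axis t" 0 "arg_axis s" 0]
    by simp
qed

lemma loop_dir_eq_sum: "loop_dir sg p = (\<Sum>s\<in>Lp sg p. 1 *\<^sub>R arg_axis s)"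
  unfolding loop_dir_def sum_scaleR_arg_axis by simp

lemma dir_deriv_loop_dir:
  assumes "smooth f"
  shows "dir_deriv f (loop_dir sg p) x = (\<Sum>s\<in>Lp sg p. dir_deriv f (arg_axis s) x)"
  unfolding loop_dir_eq_sum using dir_deriv_sum_scaleR[OF assms, of "Lp sg p" "\<lambda>_. 1" arg_axis x]
  by simp

lemma dir_deriv_loop_dir_0: "smooth f \<Longrightarrow> dir_deriv f (loop_dir sg p) 0 = (\<Sum>s\<in>Lp sg p. acoef f s)"
  by (simp add: dir_deriv_loop_dir acoef_eq_dir_deriv)

lemma dir_deriv2_loop_dir_0:
  assumes f: "smooth f"
  shows "dir_deriv (dir_deriv f (loop_dir sg p)) (loop_dir sg p) 0 = 2 * Fcoef sg f p"
proof -
  have "dir_deriv f (loop_dir sg p) = (\<lambda>x. \<Sum>t\<in>Lp sg p. dir_deriv f (arg_axis t) x)"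
    by (intro ext) (rule dir_deriv_loop_dir[OF f])
  then have "dir_deriv (dir_deriv f (loop_dir sg p)) (loop_dir sg p) 0
      = (\<Sum>t\<in>Lp sg p. dir_deriv (dir_deriv f (arg_axis t)) (loop_dir sg p) 0)"
    using dir_deriv_sum_fun[of "Lp sg p" "\<lambda>t. dir_deriv f (arg_axis t)"] smooth_dir_deriv[OF f]
    by simp
  also have "\<dots> = (\<Sum>t\<in>Lp sg p. \<Sum>s\<in>Lp sg p. dir_deriv (dir_deriv f (arg_axis t)) (arg_axis s) 0)"
    by (intro sum.cong refl dir_deriv_loop_dir smooth_dir_deriv f)
  also have "\<dots> = (\<Sum>t\<in>Lp sg p. \<Sum>s\<in>Lp sg p. 2 * fcoef f s t)"
    by (simp add: fcoef_eq_dir_deriv[OF f])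
  also have "\<dots> = 2 * Fcoef sg f p"
    unfolding Fcoef_def by (simp add: sum_distrib_left) (rule sum.swap)
  finally show ?thesis .
qed

lemma dir_deriv_drive_dir_0:
  assumes f: "smooth f"
  shows "dir_deriv f (drive_dir sg d p) 0 = Acoef sg f d p"
proof -
  define c where "c s = (if s \<in> Lp sg p then 0 else d (sg s p))" for s
  have "drive_dir sg d p = (\<Sum>s\<in>UNIV. c s *\<^sub>R arg_axis s) + (0, 1)"
    unfolding drive_dir_def sum_scaleR_arg_axis c_def by simp
  then have "dir_deriv f (drive_dir sg d p) 0
      = (\<Sum>s\<in>UNIV. c s * dir_deriv f (arg_axis s) 0) + dir_deriv f (0, 1) 0"
    by (simp add: dir_deriv_add[OF f] dir_deriv_sum_scaleR[OF f])
  also have "\<dots> = (\<Sum>s\<in>UNIV. if s \<in> Lp sg p then 0 else acoef f s * d (sg s p)) + lcoef f"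
    using acoef_eq_dir_deriv[OF f] lcoef_eq_dir_deriv[OF f] by (auto simp: c_def intro!: sum.cong)
  also have "\<dots> = Acoef sg f d p"
    unfolding Acoef_def by (simp add: sum.If_cases Diff_eq)
  finally show ?thesis .
qed

lemma upstream_component_approx:
  fixes sg :: "'s::finite \<Rightarrow> 'c::finite \<Rightarrow> 'c"
  assumes H: "hypH sg xs d xi p" and X: "Xi sg xi p = 0" and s: "s \<notin> Lp sg p"
  shows "\<exists>C. \<forall>\<^sub>F l in at_right 0. \<bar>xs (sg s p) l - l * d (sg s p)\<bar> \<le> C * l^2"
proof -
  define q where "q = sg s p"
  have "q \<noteq> p" using s by (simp add: Lp_def q_def)
  moreover have "(q, p) \<in> edges sg" unfolding edges_def q_def by blast
  ultimately have "strictly_above sg q p" unfolding strictly_above_def below_def by auto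
  then have "(\<lambda>l. xs q l - d q * l powr (2 powr (- real (xi q))))
        \<in> O[at_right 0](\<lambda>l. l powr (2 powr (- (real (xi q) - 1))))"
    using H unfolding hypH_def by blast
  moreover have "q \<in> Sigma_star sg p"
    using \<open>q \<noteq> p\<close> unfolding Sigma_star_def Sigma_img_def q_def by auto
  then have "xi q \<le> Xi sg xi p" unfolding Xi_def by (intro Max_ge) auto
  then have "xi q = 0" using X by simp
  ultimately have "(\<lambda>l. xs q l - d q * l powr 1) \<in> O[at_right 0](\<lambda>l. l powr 2)" by simp
  then obtain C where C: "\<forall>\<^sub>F l in at_right 0. norm (xs q l - d q * l powr 1) \<le> C * norm (l powr (2::real))"
    by (elim landau_o.bigE) auto
  have "\<forall>\<^sub>F l in at_right 0. \<bar>xs q l - l * d q\<bar> \<le> C * l^2"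
    using C eventually_at_right_less[of 0] by eventually_elim (simp add: mult.commute)
  then show ?thesis unfolding q_def by blast
qed

lemma upstream_approx:
  fixes sg :: "'s::finite \<Rightarrow> 'c::finite \<Rightarrow> 'c"
  assumes H: "hypH sg xs d xi p" and X: "Xi sg xi p = 0"
  shows "\<exists>C\<ge>0. \<forall>\<^sub>F l in at_right 0. norm (upstream sg xs p l - l *\<^sub>R drive_dir sg d p) \<le> C * l^2"
proof -
  define e where "e s l = (if s \<in> Lp sg p then 0 else xs (sg s p) l - l * d (sg s p))" for s l
  have "\<exists>C. \<forall>\<^sub>F l in at_right 0. \<bar>e s l\<bar> \<le> C * l^2" for s
  proof (cases "s \<in> Lp sg p")
    case True
    then show ?thesis by (intro exI[of _ 0]) (simp add: e_def)
  next
    case False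
    then show ?thesis using upstream_component_approx[OF H X False] by (simp add: e_def)
  qed
  then obtain C where "\<And>s. \<forall>\<^sub>F l in at_right 0. \<bar>e s l\<bar> \<le> C s * l^2" by metis
  then have ev: "\<forall>\<^sub>F l in at_right 0. \<forall>s. \<bar>e s l\<bar> \<le> C s * l^2"
    by (rule eventually_all_finite)
  have "\<forall>\<^sub>F l in at_right 0. norm (upstream sg xs p l - l *\<^sub>R drive_dir sg d p) \<le> \<bar>sum C UNIV\<bar> * l^2"
    using ev
  proof eventually_elim
    case (elim l)
    have "upstream sg xs p l - l *\<^sub>R drive_dir sg d p = ((\<chi> s. e s l), 0)"
      unfolding upstream_def drive_dir_def e_def by (simp add: prod_eq_iff vec_eq_iff)
    then have "norm (upstream sg xs p l - l *\<^sub>R drive_dir sg d p) = norm (\<chi> s. e s l)" by simp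
    also have "\<dots> \<le> (\<Sum>s\<in>UNIV. \<bar>e s l\<bar>)" using norm_le_l1_cart[of "\<chi> s. e s l"] by simp
    also have "\<dots> \<le> (\<Sum>s\<in>UNIV. C s * l^2)" by (rule sum_mono) (use elim in auto)
    also have "\<dots> \<le> \<bar>sum C UNIV\<bar> * l^2" by (simp add: sum_distrib_right[symmetric] mult_right_mono)
    finally show ?case .
  qed
  then show ?thesis by (intro exI[of _ "\<bar>sum C UNIV\<bar>"]) simp
qed

lemma eventually_near_quadratic_peq:
  fixes sg :: "'s::finite \<Rightarrow> 'c::finite \<Rightarrow> 'c"
  assumes f: "smooth f" and B: "condB sg f" and p: "critical sg f p"
    and H: "hypH sg xs d xi p" and X: "Xi sg xi p = 0"
  shows "\<exists>r>0. \<exists>c>0. \<exists>\<phi>' \<phi>''. \<forall>\<^sub>F l in at_right 0.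
           near_quadratic (\<lambda>y. peq f sg xs p y l) (\<phi>' l) (\<phi>'' l) r (Acoef sg f d p) (Fcoef sg f p) c l"
proof -
  have f0: "f 0 = 0" using B unfolding condB_def by (simp add: zero_prod_def)
  have f1: "dir_deriv f (loop_dir sg p) 0 = 0"
    using p by (simp add: dir_deriv_loop_dir_0[OF f] critical_def)
  obtain C where "C \<ge> 0"
    "\<forall>\<^sub>F l in at_right 0. norm (upstream sg xs p l - l *\<^sub>R drive_dir sg d p) \<le> C * l^2"
    using upstream_approx[OF H X] by blast
  from eventually_near_quadratic_restriction[OF f f0 f1 dir_deriv2_loop_dir_0[OF f]
      dir_deriv_drive_dir_0[OF f] this]
  obtain r c where rc: "r > 0" "c > 0" and ev: "\<forall>\<^sub>F l in at_right 0.
      near_quadratic (\<lambda>y. f (upstream sg xs p l + y *\<^sub>R loop_dir sg p))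
        (\<lambda>y. dir_deriv f (loop_dir sg p) (upstream sg xs p l + y *\<^sub>R loop_dir sg p))
        (\<lambda>y. dir_deriv (dir_deriv f (loop_dir sg p)) (loop_dir sg p)
               (upstream sg xs p l + y *\<^sub>R loop_dir sg p))
        r (Acoef sg f d p) (Fcoef sg f p) c l"
    by blast
  show ?thesis unfolding peq_eq_upstream
    by (rule exI[of _ r], rule conjI[OF rc(1)], rule exI[of _ c], rule conjI[OF rc(2)],
        rule exI, rule exI, rule ev)
qed

theorem lemma4p18:
  fixes sg :: "'s::finite \<Rightarrow> 'c::finite \<Rightarrow> 'c"
    and s1 :: 's
    and f :: "(real^'s) \<times> real \<Rightarrow> real"
    and B :: "'c set"
    and p :: 'c
    and xs :: "'c \<Rightarrow> real \<Rightarrow> real"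
    and d :: "'c \<Rightarrow> real"
    and xi :: "'c \<Rightarrow> nat"
  assumes net: "network sg s1"
    and smooth_f: "smooth f"
    and B_cond: "condB sg f"
    and max_noncrit: "\<forall>q. maximal sg q \<longrightarrow> \<not> critical sg f q"
    and root: "root_subnetwork sg f B"
    and p_notin: "p \<notin> B"
    and p_crit: "critical sg f p"
    and H: "hypH sg xs d xi p"
    and L: "condL sg f d xi p"
    and generic: "Fcoef sg f p \<noteq> 0"
  shows
    "(Acoef sg f d p / Fcoef sg f p > 0 \<longrightarrow>
        (\<exists>\<delta>>0. \<forall>\<^sub>F l in at_right 0. \<forall>y. \<bar>y\<bar> < \<delta> \<longrightarrow> peq f sg xs p y l \<noteq> 0))
   \<and> (Acoef sg f d p / Fcoef sg f p < 0 \<longrightarrow>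
        (let dp = sqrt (- Acoef sg f d p / Fcoef sg f p) in
           dp \<noteq> 0 \<and>
           (\<exists>\<delta>>0. \<exists>xp xm :: real \<Rightarrow> real.
              (\<forall>\<^sub>F l in at_right 0. {y. \<bar>y\<bar> < \<delta> \<and> peq f sg xs p y l = 0} = {xp l, xm l}) \<and>
              (\<lambda>l. xp l - dp * sqrt l) \<in> O[at_right 0](\<lambda>l. l) \<and>
              (\<lambda>l. xm l - (- dp) * sqrt l) \<in> O[at_right 0](\<lambda>l. l))))"
proof -
  have "Xi sg xi p = 0" using L unfolding condL_def by simp
  then obtain r c \<phi>' \<phi>'' where "r > 0" "c > 0" and ev: "\<forall>\<^sub>F l in at_right 0.
      near_quadratic (\<lambda>y. peq f sg xs p y l) (\<phi>' l) (\<phi>'' l) r (Acoef sg f d p) (Fcoef sg f p) c l"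
    using eventually_near_quadratic_peq[OF smooth_f B_cond p_crit H] by blast
  from near_quadratic_family_saddle_node[OF generic \<open>c > 0\<close> \<open>r > 0\<close> ev]
  show ?thesis unfolding Let_def by (auto simp: divide_less_0_iff)
qed

end
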